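(* Under the curve flow $\gamma_t=k_1\gamma''+k_2\gamma'+r_0\gamma$ with $r_0=-\big(k_2'+\tfrac13(k_1''+2k_1^2)\big)$, the curvature evolution is bi-Hamiltonian: \[ \begin{pmatrix}k_1\\ k_2\end{pmatrix}_t=\mathcal{P}\,\mathsf E\rho_2=\mathcal{Q}\,\mathsf E\rho_4, \] with $\rho_2=k_1k_2$ and $\rho_4=\tfrac13(k_1'')^2+k_1''(k_2'-k_1^2)-k_1(k_1')^2+(k_2')^2-k_1^2k_2'+\tfrac19k_1^4+2k_1k_2^2$. Hence $\int\rho_2\,\mathrm{d}x$ and $\int\rho_4\,\mathrm{d}x$ are conserved integrals (and so is $\int k_1\,\mathrm{d}x$).
   Context: $\gamma(x,t)$ is a family of nondegenerate curves in centroaffine $\mathbb R^3$ parametrized by centroaffine arclength $x$ ($\det(\gamma,\gamma',\gamma'')=1$), with $\gamma'''=(k_1\gamma)'+k_2\gamma$. $D=\partial/\partial x$; $\mathcal{P}=\begin{pmatrix}-2D^3+Dk_1+k_1D & -D^4+D^2k_1+2Dk_2+k_2D\\ D^4-k_1D^2+2k_2D+Dk_2 & \tfrac23(D^5+k_1Dk_1-k_1D^3-D^3k_1)+[k_2,D^2]\end{pmatrix}$, $\mathcal{Q}=\begin{pmatrix}0&D\\ D&0\end{pmatrix}$, and $\mathsf E f=\big(\sum_{j\ge0}(-D)^j\partial f/\partial k_1^{(j)},\ \sum_{j\ge0}(-D)^j\partial f/\partial k_2^{(j)}\big)^{\mathrm T}$ is the vector Euler operator. *)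

theory Defs
  imports "HOL-Analysis.Analysis"
begin

definition C_inf2 :: "(real \<Rightarrow> real \<Rightarrow> 'a::real_normed_vector) \<Rightarrow> bool" where
  "C_inf2 F \<longleftrightarrow> (\<exists>G::nat \<Rightarrow> nat \<Rightarrow> real \<Rightarrow> real \<Rightarrow> 'a.
     G 0 0 = F \<and>
     (\<forall>i j. continuous_on UNIV (\<lambda>(x,t). G i j x t) \<and>
        (\<forall>x t. ((\<lambda>y. G i j y t) has_vector_derivative G (Suc i) j x t) (at x) \<and>
               ((\<lambda>s. G i j x s) has_vector_derivative G i (Suc j) x t) (at t))))"

definition Dx :: "nat \<Rightarrow> (real \<Rightarrow> real \<Rightarrow> 'a::real_normed_vector) \<Rightarrow> real \<Rightarrow> real \<Rightarrow> 'a" where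
  "Dx n F x t = (((\<lambda>g y. vector_derivative g (at y)) ^^ n) (\<lambda>y. F y t)) x"

definition Dt :: "(real \<Rightarrow> real \<Rightarrow> 'a::real_normed_vector) \<Rightarrow> real \<Rightarrow> real \<Rightarrow> 'a" where
  "Dt F x t = vector_derivative (\<lambda>s. F x s) (at t)"

text \<open>A differential function is f :: (nat \<Rightarrow> real) \<Rightarrow> (nat \<Rightarrow> real) \<Rightarrow> real, where
the arguments a, b are the jets: a j stands for k1^(j), b j for k2^(j).\<close>

definition jet :: "(real \<Rightarrow> real) \<Rightarrow> real \<Rightarrow> nat \<Rightarrow> real" where
  "jet u x = (\<lambda>j. (deriv ^^ j) u x)"

definition dens :: "((nat \<Rightarrow> real) \<Rightarrow> (nat \<Rightarrow> real) \<Rightarrow> real) \<Rightarrow> (real \<Rightarrow> real) \<Rightarrow> (real \<Rightarrow> real) \<Rightarrow> real \<Rightarrow> real" where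
  "dens f u v x = f (jet u x) (jet v x)"

definition pd1 :: "((nat \<Rightarrow> real) \<Rightarrow> (nat \<Rightarrow> real) \<Rightarrow> real) \<Rightarrow> nat \<Rightarrow> (nat \<Rightarrow> real) \<Rightarrow> (nat \<Rightarrow> real) \<Rightarrow> real" where
  "pd1 f j a b = deriv (\<lambda>s. f (a(j := s)) b) (a j)"

definition pd2 :: "((nat \<Rightarrow> real) \<Rightarrow> (nat \<Rightarrow> real) \<Rightarrow> real) \<Rightarrow> nat \<Rightarrow> (nat \<Rightarrow> real) \<Rightarrow> (nat \<Rightarrow> real) \<Rightarrow> real" where
  "pd2 f j a b = deriv (\<lambda>s. f a (b(j := s))) (b j)"

text \<open>Components of the vector Euler operator, evaluated along (k1,k2) = (u,v):
  sum over j of (-D)^j applied to the partial derivative; the sum ranges over the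
  (finite, for differential polynomials) set of j on which the partial is not identically 0.\<close>
definition euler1 :: "((nat \<Rightarrow> real) \<Rightarrow> (nat \<Rightarrow> real) \<Rightarrow> real) \<Rightarrow> (real \<Rightarrow> real) \<Rightarrow> (real \<Rightarrow> real) \<Rightarrow> real \<Rightarrow> real" where
  "euler1 f u v x = (\<Sum>j\<in>{j. \<exists>a b. pd1 f j a b \<noteq> 0}.
      (-1)^j * (deriv ^^ j) (\<lambda>y. pd1 f j (jet u y) (jet v y)) x)"

definition euler2 :: "((nat \<Rightarrow> real) \<Rightarrow> (nat \<Rightarrow> real) \<Rightarrow> real) \<Rightarrow> (real \<Rightarrow> real) \<Rightarrow> (real \<Rightarrow> real) \<Rightarrow> real \<Rightarrow> real" where
  "euler2 f u v x = (\<Sum>j\<in>{j. \<exists>a b. pd2 f j a b \<noteq> 0}.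
      (-1)^j * (deriv ^^ j) (\<lambda>y. pd2 f j (jet u y) (jet v y)) x)"

definition rho2 :: "(nat \<Rightarrow> real) \<Rightarrow> (nat \<Rightarrow> real) \<Rightarrow> real" where
  "rho2 a b = a 0 * b 0"

definition rho4 :: "(nat \<Rightarrow> real) \<Rightarrow> (nat \<Rightarrow> real) \<Rightarrow> real" where
  "rho4 a b = 1/3 * (a 2)^2 + a 2 * (b 1 - (a 0)^2) - a 0 * (a 1)^2 + (b 1)^2
              - (a 0)^2 * b 1 + 1/9 * (a 0)^4 + 2 * a 0 * (b 0)^2"

definition opP1 :: "(real \<Rightarrow> real) \<Rightarrow> (real \<Rightarrow> real) \<Rightarrow> (real \<Rightarrow> real) \<Rightarrow> (real \<Rightarrow> real) \<Rightarrow> real \<Rightarrow> real" where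
  "opP1 k1 k2 f g x =
     - 2 * (deriv ^^ 3) f x + deriv (\<lambda>y. k1 y * f y) x + k1 x * deriv f x
     - (deriv ^^ 4) g x + (deriv ^^ 2) (\<lambda>y. k1 y * g y) x
     + 2 * deriv (\<lambda>y. k2 y * g y) x + k2 x * deriv g x"

definition opP2 :: "(real \<Rightarrow> real) \<Rightarrow> (real \<Rightarrow> real) \<Rightarrow> (real \<Rightarrow> real) \<Rightarrow> (real \<Rightarrow> real) \<Rightarrow> real \<Rightarrow> real" where
  "opP2 k1 k2 f g x =
     (deriv ^^ 4) f x - k1 x * (deriv ^^ 2) f x + 2 * k2 x * deriv f x
     + deriv (\<lambda>y. k2 y * f y) x
     + 2/3 * ((deriv ^^ 5) g x + k1 x * deriv (\<lambda>y. k1 y * g y) x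
              - k1 x * (deriv ^^ 3) g x - (deriv ^^ 3) (\<lambda>y. k1 y * g y) x)
     + (k2 x * (deriv ^^ 2) g x - (deriv ^^ 2) (\<lambda>y. k2 y * g y) x)"

definition opQ1 :: "(real \<Rightarrow> real) \<Rightarrow> (real \<Rightarrow> real) \<Rightarrow> real \<Rightarrow> real" where
  "opQ1 f g x = deriv g x"

definition opQ2 :: "(real \<Rightarrow> real) \<Rightarrow> (real \<Rightarrow> real) \<Rightarrow> real \<Rightarrow> real" where
  "opQ2 f g x = deriv f x"

end

theory Submission
  imports Defs
begin

text \<open>Since \<open>det(\<gamma>, \<gamma>', \<gamma>'') = 1\<close>, the moving frame \<open>(\<gamma>, \<gamma>', \<gamma>'')\<close> is a basis. Differentiating
the flow \<open>\<gamma>\<^sub>t = k\<^sub>1 \<gamma>'' + k\<^sub>2 \<gamma>' + r\<^sub>0 \<gamma>\<close> three times in \<open>x\<close>, using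
\<open>\<gamma>''' = (k\<^sub>1' + k\<^sub>2) \<gamma> + k\<^sub>1 \<gamma>'\<close> at each step, writes \<open>\<gamma>\<^sub>t'''\<close> in the frame;
differentiating the structure equation in \<open>t\<close> writes the same vector in terms of \<open>k\<^sub>1\<^sub>t\<close> and
\<open>k\<^sub>2\<^sub>t\<close>. Comparing the coefficients of \<open>\<gamma>'\<close> and \<open>\<gamma>\<close> gives the curvature evolution as explicit
differential polynomials, and both Hamiltonian forms become polynomial identities in the jets of
\<open>k\<^sub>1, k\<^sub>2\<close>. A density \<open>\<rho>\<close> is conserved because along the flow \<open>\<rho>\<^sub>t = \<Phi>\<^sub>x\<close> for an
explicit differential polynomial \<open>\<Phi>\<close>, which is periodic with \<open>k\<^sub>1, k\<^sub>2\<close>; so by the Leibniz rule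
the derivative of \<open>\<integral>\<^sub>0\<^sup>L \<rho> dx\<close> is \<open>\<Phi>(L) - \<Phi>(0) = 0\<close>.\<close>

subsection \<open>Calculus on the real line\<close>

text \<open>Function-level forms of the library's pointwise rules for \<open>deriv\<close>: in
\<open>(deriv ^^ n) f\<close> the inner derivatives occur unapplied, so only these let the simplifier
differentiate iterated derivatives of differential polynomials.\<close>

lemma funpow_numeral: "f ^^ numeral k = f \<circ> f ^^ pred_numeral k"
  by (simp add: numeral_eq_Suc)

lemma deriv_fun_add:
  "(\<And>y. f field_differentiable at y) \<Longrightarrow> (\<And>y. g field_differentiable at y) \<Longrightarrow>
    deriv (\<lambda>y. f y + g y) = (\<lambda>y. deriv f y + deriv g y)"
  by (rule ext) simp

lemma deriv_fun_diff:
  "(\<And>y. f field_differentiable at y) \<Longrightarrow> (\<And>y. g field_differentiable at y) \<Longrightarrow>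
    deriv (\<lambda>y. f y - g y) = (\<lambda>y. deriv f y - deriv g y)"
  by (rule ext) simp

lemma deriv_fun_minus:
  "(\<And>y. f field_differentiable at y) \<Longrightarrow> deriv (\<lambda>y. - f y) = (\<lambda>y. - deriv f y)"
  by (rule ext) simp

lemma deriv_fun_mult:
  "(\<And>y. f field_differentiable at y) \<Longrightarrow> (\<And>y. g field_differentiable at y) \<Longrightarrow>
    deriv (\<lambda>y. f y * g y) = (\<lambda>y. f y * deriv g y + deriv f y * g y)"
  by (rule ext) simp

lemma deriv_fun_divide_const:
  "(\<And>y. f field_differentiable at y) \<Longrightarrow> deriv (\<lambda>y. f y / c) = (\<lambda>y. deriv f y / c)"
  by (rule ext) (rule deriv_cdivide_right)

lemma deriv_fun_power:
  fixes f :: "'a::real_normed_field \<Rightarrow> 'a"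
  shows "(\<And>y. f field_differentiable at y) \<Longrightarrow>
    deriv (\<lambda>y. f y ^ n) = (\<lambda>y. of_nat n * f y ^ (n - 1) * deriv f y)"
  by (rule ext, rule DERIV_imp_deriv)
     (auto intro!: derivative_eq_intros simp: DERIV_deriv_iff_field_differentiable[symmetric])

lemmas deriv_fun_simps = funpow_numeral deriv_fun_add deriv_fun_diff deriv_fun_minus deriv_fun_mult
  deriv_fun_divide_const deriv_fun_power field_differentiable_add field_differentiable_diff field_differentiable_minus
  field_differentiable_mult field_differentiable_divide field_differentiable_power

lemma integral_conserved_by_periodic_flux:
  fixes \<rho> \<rho>_t \<Phi> :: "real \<Rightarrow> real \<Rightarrow> real"
  assumes "L > 0"
    and time_deriv: "\<And>x s. ((\<lambda>s. \<rho> x s) has_real_derivative \<rho>_t x s) (at s)"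
    and flux: "\<And>x s. ((\<lambda>y. \<Phi> y s) has_real_derivative \<rho>_t x s) (at x)"
    and continuous_time_deriv: "continuous_on UNIV (\<lambda>p. \<rho>_t (fst p) (snd p))"
    and continuous_density: "\<And>s. continuous_on {0..L} (\<lambda>x. \<rho> x s)"
    and periodic_flux: "\<And>s. \<Phi> L s = \<Phi> 0 s"
  shows "integral {0..L} (\<lambda>x. \<rho> x t) = integral {0..L} (\<lambda>x. \<rho> x s)"
proof -
  have "((\<lambda>s. integral {0..L} (\<lambda>x. \<rho> x s)) has_real_derivative 0) (at s)" for s
  proof -
    have "continuous_on (UNIV \<times> cbox 0 L) (\<lambda>(s, x). \<rho>_t x s)"
      using continuous_on_compose[OF continuous_on_swap continuous_on_subset[OF continuous_time_deriv]]
      by (simp add: o_def case_prod_beta)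
    then have "((\<lambda>s. integral (cbox 0 L) (\<lambda>x. \<rho> x s)) has_real_derivative
        integral (cbox 0 L) (\<lambda>x. \<rho>_t x s)) (at s)"
      using leibniz_rule_field_derivative[of UNIV 0 L "\<lambda>s x. \<rho> x s" "\<lambda>s x. \<rho>_t x s" s]
        time_deriv continuous_density integrable_continuous_real
      by (auto simp: has_field_derivative_at_within) blast
    moreover have "((\<lambda>x. \<rho>_t x s) has_integral \<Phi> L s - \<Phi> 0 s) {0..L}"
      using \<open>L > 0\<close> flux
      by (intro fundamental_theorem_of_calculus)
         (auto simp: has_real_derivative_iff_has_vector_derivative has_vector_derivative_at_within)
    ultimately show ?thesis
      using periodic_flux by (simp add: integral_unique)
  qed
  then show ?thesis
    using DERIV_isconst_all by blast
qed

definition smooth_partials :: "(nat \<Rightarrow> nat \<Rightarrow> real \<Rightarrow> real \<Rightarrow> 'a::real_normed_vector) \<Rightarrow> bool" where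
  "smooth_partials G \<longleftrightarrow> (\<forall>i j. continuous_on UNIV (\<lambda>(x, t). G i j x t) \<and>
     (\<forall>x t. ((\<lambda>y. G i j y t) has_vector_derivative G (Suc i) j x t) (at x) \<and>
            ((\<lambda>s. G i j x s) has_vector_derivative G i (Suc j) x t) (at t)))"

lemma C_inf2_iff_smooth_partials: "C_inf2 F \<longleftrightarrow> (\<exists>G. G 0 0 = F \<and> smooth_partials G)"
  unfolding C_inf2_def smooth_partials_def by blast

lemma smooth_partials_vector_derivative_x:
  "smooth_partials G \<Longrightarrow> ((\<lambda>y. G i j y t) has_vector_derivative G (Suc i) j x t) (at x)"
  unfolding smooth_partials_def by blast

lemma smooth_partials_vector_derivative_t:
  "smooth_partials G \<Longrightarrow> ((\<lambda>s. G i j x s) has_vector_derivative G i (Suc j) x t) (at t)"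
  unfolding smooth_partials_def by blast

lemma Dx_smooth_partials:
  assumes "smooth_partials G"
  shows "Dx n (G 0 0) x t = G n 0 x t"
proof -
  have "((\<lambda>g y. vector_derivative g (at y)) ^^ n) (\<lambda>y. G 0 0 y t) = (\<lambda>y. G n 0 y t)"
    by (induction n)
       (auto intro!: vector_derivative_at smooth_partials_vector_derivative_x[OF assms])
  then show ?thesis
    unfolding Dx_def by simp
qed

lemma Dt_smooth_partials: "smooth_partials G \<Longrightarrow> Dt (G 0 0) x t = G 0 1 x t"
  using smooth_partials_vector_derivative_t[of G 0 0 x t] by (simp add: Dt_def vector_derivative_at)

lemma Dx_1_scaleR_smooth_partials:
  assumes "smooth_partials F" "smooth_partials G"
  shows "Dx 1 (\<lambda>y s. F 0 0 y s *\<^sub>R G 0 0 y s) x t = F 1 0 x t *\<^sub>R G 0 0 x t + F 0 0 x t *\<^sub>R G 1 0 x t"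
proof -
  have "((\<lambda>y. F 0 0 y t *\<^sub>R G 0 0 y t) has_vector_derivative
         F 0 0 x t *\<^sub>R G 1 0 x t + F 1 0 x t *\<^sub>R G 0 0 x t) (at x)"
    using smooth_partials_vector_derivative_x[OF assms(1)] smooth_partials_vector_derivative_x[OF assms(2)]
    by (auto intro!: has_vector_derivative_scaleR simp: has_real_derivative_iff_has_vector_derivative)
  then show ?thesis
    unfolding Dx_def by (simp add: vector_derivative_at add.commute)
qed

locale real_partials =
  fixes F :: "nat \<Rightarrow> nat \<Rightarrow> real \<Rightarrow> real \<Rightarrow> real"
  assumes smooth: "smooth_partials F"
begin

lemma has_field_derivative_x [derivative_intros]:
  "D = F (Suc i) j x t \<Longrightarrow> ((\<lambda>y. F i j y t) has_field_derivative D) (at x within S)"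
  using smooth_partials_vector_derivative_x[OF smooth]
  by (simp add: has_real_derivative_iff_has_vector_derivative has_vector_derivative_at_within)

lemma has_field_derivative_t [derivative_intros]:
  "D = F i (Suc j) x t \<Longrightarrow> ((\<lambda>s. F i j x s) has_field_derivative D) (at t within S)"
  using smooth_partials_vector_derivative_t[OF smooth]
  by (simp add: has_real_derivative_iff_has_vector_derivative has_vector_derivative_at_within)

lemma field_differentiable_x [simp]: "(\<lambda>y. F i j y t) field_differentiable at x"
  using has_field_derivative_x field_differentiable_def by blast

lemma deriv_x [simp]: "deriv (\<lambda>y. F i j y t) = (\<lambda>y. F (i + 1) j y t)"
  by (auto intro!: ext DERIV_imp_deriv has_field_derivative_x)

lemma funpow_deriv_x: "(deriv ^^ n) (\<lambda>y. F i j y t) = (\<lambda>y. F (i + n) j y t)"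
  by (induction n) simp_all

lemma jet_eq: "jet (\<lambda>y. F 0 0 y t) x = (\<lambda>n. F n 0 x t)"
  by (simp add: jet_def funpow_deriv_x)

lemma continuous_on_x [continuous_intros]: "continuous_on S (\<lambda>x. F i j x t)"
  by (rule continuous_at_imp_continuous_on) (metis DERIV_isCont has_field_derivative_x)

lemma continuous_on_xt [continuous_intros]: "continuous_on S (\<lambda>p. F i j (fst p) (snd p))"
  using smooth continuous_on_subset unfolding smooth_partials_def case_prod_beta by blast

lemma x_jet_eq: "F n j x t = (deriv ^^ n) (\<lambda>y. F 0 j y t) x"
  by (simp add: funpow_deriv_x)

lemma periodic:
  assumes "\<And>x t. F 0 0 (x + L) t = F 0 0 x t"
  shows "F i 0 (x + L) t = F i 0 x t"
proof -
  have "(\<lambda>y. F 0 0 (y + L) t) = (\<lambda>y. F 0 0 y t)"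
    using assms by simp
  then have "(deriv ^^ i) (\<lambda>y. F 0 0 (y + L) t) x = F i 0 x t"
    by (simp add: funpow_deriv_x)
  moreover have "(deriv ^^ i) (\<lambda>y. F 0 0 (y + L) t) = (\<lambda>y. F i 0 (y + L) t)"
  proof (induction i)
    case (Suc i)
    have "deriv (\<lambda>y. F i 0 (y + L) t) = (\<lambda>y. F (Suc i) 0 (y + L) t)"
      using DERIV_shift[of "\<lambda>y. F i 0 y t"] has_field_derivative_x by (blast intro: ext DERIV_imp_deriv)
    with Suc show ?case by simp
  qed simp
  ultimately show ?thesis by simp
qed

end

subsection \<open>Variational derivatives of the densities\<close>

lemma pd1_eqI: "((\<lambda>s. f (a(j := s)) b) has_real_derivative D) (at (a j)) \<Longrightarrow> pd1 f j a b = D"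
  unfolding pd1_def by (rule DERIV_imp_deriv)

lemma pd2_eqI: "((\<lambda>s. f a (b(j := s))) has_real_derivative D) (at (b j)) \<Longrightarrow> pd2 f j a b = D"
  unfolding pd2_def by (rule DERIV_imp_deriv)

lemma pd1_eq_0: "(\<And>s. f (a(j := s)) b = f a b) \<Longrightarrow> pd1 f j a b = 0"
  unfolding pd1_def by simp

lemma pd2_eq_0: "(\<And>s. f a (b(j := s)) = f a b) \<Longrightarrow> pd2 f j a b = 0"
  unfolding pd2_def by simp

lemma pd1_rho2: "pd1 rho2 j a b = (if j = 0 then b 0 else 0)"
  by (cases "j = 0")
     (auto simp: rho2_def intro!: pd1_eqI pd1_eq_0 derivative_eq_intros)

lemma pd2_rho2: "pd2 rho2 j a b = (if j = 0 then a 0 else 0)"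
  by (cases "j = 0")
     (auto simp: rho2_def intro!: pd2_eqI pd2_eq_0 derivative_eq_intros)

lemma euler1_rho2: "euler1 rho2 u v x = v x"
proof -
  have "{j. \<exists>a b. pd1 rho2 j a b \<noteq> 0} = {0}"
    by (auto simp: pd1_rho2 intro: exI[of _ "\<lambda>_. 1"])
  then show ?thesis
    by (simp add: euler1_def pd1_rho2 jet_def)
qed

lemma euler2_rho2: "euler2 rho2 u v x = u x"
proof -
  have "{j. \<exists>a b. pd2 rho2 j a b \<noteq> 0} = {0}"
    by (auto simp: pd2_rho2 intro: exI[of _ "\<lambda>_. 1"])
  then show ?thesis
    by (simp add: euler2_def pd2_rho2 jet_def)
qed

lemma pd1_rho4:
  "pd1 rho4 0 a b = - 2 * a 0 * a 2 - a 1 ^ 2 - 2 * a 0 * b 1 + 4/9 * a 0 ^ 3 + 2 * b 0 ^ 2"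
  "pd1 rho4 1 a b = - 2 * a 0 * a 1"
  "pd1 rho4 2 a b = 2/3 * a 2 + b 1 - a 0 ^ 2"
  "j > 2 \<Longrightarrow> pd1 rho4 j a b = 0"
  by (auto simp: rho4_def intro!: pd1_eqI pd1_eq_0 derivative_eq_intros)

lemma pd2_rho4:
  "pd2 rho4 0 a b = 4 * a 0 * b 0"
  "pd2 rho4 1 a b = a 2 + 2 * b 1 - a 0 ^ 2"
  "j > 1 \<Longrightarrow> pd2 rho4 j a b = 0"
  by (auto simp: rho4_def intro!: pd2_eqI pd2_eq_0 derivative_eq_intros)

lemma euler1_rho4:
  "euler1 rho4 u v x = pd1 rho4 0 (jet u x) (jet v x)
     - deriv (\<lambda>y. pd1 rho4 1 (jet u y) (jet v y)) x
     + (deriv ^^ 2) (\<lambda>y. pd1 rho4 2 (jet u y) (jet v y)) x"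
proof -
  have "{j. \<exists>a b. pd1 rho4 j a b \<noteq> 0} = {0, 1, 2}"
  proof (intro equalityI subsetI)
    fix j assume "j \<in> {j. \<exists>a b. pd1 rho4 j a b \<noteq> 0}"
    then show "j \<in> {0, 1, 2}"
      using pd1_rho4(4) by (cases "j > 2") auto
  next
    have "pd1 rho4 0 (\<lambda>_. 0) (\<lambda>_. 1) \<noteq> 0" "pd1 rho4 1 (\<lambda>_. 1) (\<lambda>_. 1) \<noteq> 0"
      "pd1 rho4 2 (\<lambda>_. 0) (\<lambda>_. 1) \<noteq> 0"
      by (simp_all only: pd1_rho4(1-3)) simp_all
    then show "j \<in> {j. \<exists>a b. pd1 rho4 j a b \<noteq> 0}" if "j \<in> {0, 1, 2}" for j
      using that by blast
  qed
  then show ?thesis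
    by (simp add: euler1_def)
qed

lemma euler2_rho4:
  "euler2 rho4 u v x = pd2 rho4 0 (jet u x) (jet v x) - deriv (\<lambda>y. pd2 rho4 1 (jet u y) (jet v y)) x"
proof -
  have "{j. \<exists>a b. pd2 rho4 j a b \<noteq> 0} = {0, 1}"
  proof (intro equalityI subsetI)
    fix j assume "j \<in> {j. \<exists>a b. pd2 rho4 j a b \<noteq> 0}"
    then show "j \<in> {0, 1}"
      using pd2_rho4(3) by (cases "j > 1") auto
  next
    have "pd2 rho4 0 (\<lambda>_. 1) (\<lambda>_. 1) \<noteq> 0" "pd2 rho4 1 (\<lambda>_. 0) (\<lambda>_. 1) \<noteq> 0"
      by (simp_all only: pd2_rho4(1-2)) simp_all
    then show "j \<in> {j. \<exists>a b. pd2 rho4 j a b \<noteq> 0}" if "j \<in> {0, 1}" for j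
      using that by blast
  qed
  then show ?thesis
    by (simp add: euler2_def)
qed

subsection \<open>The bi-Hamiltonian form of the curvature evolution\<close>

locale curvature_pair = K: real_partials K + H: real_partials H
  for K H :: "nat \<Rightarrow> nat \<Rightarrow> real \<Rightarrow> real \<Rightarrow> real"

locale curvature_flow = curvature_pair +
  assumes k1_evolution: "K 0 1 x t = 2 * K 0 0 x t * K 2 0 x t + 4 * K 0 0 x t * H 1 0 x t
      + 4 * K 1 0 x t * H 0 0 x t + 2 * K 1 0 x t ^ 2 - K 4 0 x t - 2 * H 3 0 x t"
    and k2_evolution: "H 0 1 x t = - 2 * K 0 0 x t * K 3 0 x t - 2 * K 0 0 x t * H 2 0 x t
      + 4/3 * K 0 0 x t ^ 2 * K 1 0 x t - 4 * K 1 0 x t * K 2 0 x t - 2 * K 1 0 x t * H 1 0 x t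
      + 2/3 * K 5 0 x t + 4 * H 0 0 x t * H 1 0 x t + H 4 0 x t"
begin

lemma k1_evolution_eq_opP1:
  "K 0 1 x t = opP1 (\<lambda>y. K 0 0 y t) (\<lambda>y. H 0 0 y t)
     (euler1 rho2 (\<lambda>y. K 0 0 y t) (\<lambda>y. H 0 0 y t)) (euler2 rho2 (\<lambda>y. K 0 0 y t) (\<lambda>y. H 0 0 y t)) x"
  unfolding opP1_def euler1_rho2 euler2_rho2 k1_evolution
  by (simp add: deriv_fun_simps) (simp add: eval_nat_numeral field_simps)

lemma k2_evolution_eq_opP2:
  "H 0 1 x t = opP2 (\<lambda>y. K 0 0 y t) (\<lambda>y. H 0 0 y t)
     (euler1 rho2 (\<lambda>y. K 0 0 y t) (\<lambda>y. H 0 0 y t)) (euler2 rho2 (\<lambda>y. K 0 0 y t) (\<lambda>y. H 0 0 y t)) x"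
  unfolding opP2_def euler1_rho2 euler2_rho2 k2_evolution
  by (simp add: deriv_fun_simps) (simp add: eval_nat_numeral field_simps)

lemma k1_evolution_eq_opQ1:
  "K 0 1 x t = opQ1 (euler1 rho4 (\<lambda>y. K 0 0 y t) (\<lambda>y. H 0 0 y t)) (euler2 rho4 (\<lambda>y. K 0 0 y t) (\<lambda>y. H 0 0 y t)) x"
  unfolding opQ1_def euler2_rho4 K.jet_eq H.jet_eq pd2_rho4 k1_evolution
  by (simp add: deriv_fun_simps) (simp add: eval_nat_numeral field_simps)

lemma k2_evolution_eq_opQ2:
  "H 0 1 x t = opQ2 (euler1 rho4 (\<lambda>y. K 0 0 y t) (\<lambda>y. H 0 0 y t)) (euler2 rho4 (\<lambda>y. K 0 0 y t) (\<lambda>y. H 0 0 y t)) x"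
  unfolding opQ2_def euler1_rho4 K.jet_eq H.jet_eq pd1_rho4 k2_evolution
  by (simp add: deriv_fun_simps) (simp add: eval_nat_numeral field_simps)

end

subsection \<open>Conservation laws\<close>

context curvature_pair
begin

lemma dens_integral_conserved:
  fixes f \<Phi> :: "(nat \<Rightarrow> real) \<Rightarrow> (nat \<Rightarrow> real) \<Rightarrow> real" and f_t :: "real \<Rightarrow> real \<Rightarrow> real"
  assumes "L > 0"
    and periodic: "\<And>x t. K 0 0 (x + L) t = K 0 0 x t" "\<And>x t. H 0 0 (x + L) t = H 0 0 x t"
    and "\<And>x s. ((\<lambda>s. f (\<lambda>n. K n 0 x s) (\<lambda>n. H n 0 x s)) has_real_derivative f_t x s) (at s)"
    and "\<And>x s. ((\<lambda>y. \<Phi> (\<lambda>n. K n 0 y s) (\<lambda>n. H n 0 y s)) has_real_derivative f_t x s) (at x)"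
    and "continuous_on UNIV (\<lambda>p. f_t (fst p) (snd p))"
    and "\<And>s. continuous_on UNIV (\<lambda>x. f (\<lambda>n. K n 0 x s) (\<lambda>n. H n 0 x s))"
  shows "integral {0..L} (dens f (\<lambda>y. K 0 0 y t) (\<lambda>y. H 0 0 y t))
       = integral {0..L} (dens f (\<lambda>y. K 0 0 y s) (\<lambda>y. H 0 0 y s))"
proof -
  have "\<Phi> (\<lambda>n. K n 0 L s) (\<lambda>n. H n 0 L s) = \<Phi> (\<lambda>n. K n 0 0 s) (\<lambda>n. H n 0 0 s)" for s
    using K.periodic[OF periodic(1), of _ 0] H.periodic[OF periodic(2), of _ 0] by simp
  then show ?thesis
    unfolding dens_def K.jet_eq H.jet_eq
    using assms by (intro integral_conserved_by_periodic_flux[where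
        \<Phi> = "\<lambda>y s. \<Phi> (\<lambda>n. K n 0 y s) (\<lambda>n. H n 0 y s)" and \<rho>_t = f_t])
      (auto intro: continuous_on_subset[OF _ subset_UNIV])
qed

end

context curvature_flow
begin

text \<open>The fluxes satisfy \<open>\<rho>\<^sub>t = \<Phi>\<^sub>x\<close> along the flow; they are obtained by integrating the time
derivative of the density, a total \<open>x\<close>-derivative, with respect to \<open>x\<close>.\<close>

definition k1_flux :: "(nat \<Rightarrow> real) \<Rightarrow> (nat \<Rightarrow> real) \<Rightarrow> real" where
  "k1_flux a b = 2 * a 0 * a 1 + 4 * a 0 * b 0 - a 3 - 2 * b 2"

lemma conserved_k1:
  assumes "L > 0" "\<And>x t. K 0 0 (x + L) t = K 0 0 x t" "\<And>x t. H 0 0 (x + L) t = H 0 0 x t"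
  shows "integral {0..L} (\<lambda>x. K 0 0 x t) = integral {0..L} (\<lambda>x. K 0 0 x s)"
proof -
  have "integral {0..L} (dens (\<lambda>a b. a 0) (\<lambda>y. K 0 0 y t) (\<lambda>y. H 0 0 y t))
      = integral {0..L} (dens (\<lambda>a b. a 0) (\<lambda>y. K 0 0 y s) (\<lambda>y. H 0 0 y s))"
  proof (rule dens_integral_conserved[where \<Phi> = k1_flux and f_t = "\<lambda>x s. K 0 1 x s", OF assms])
    show "((\<lambda>y. k1_flux (\<lambda>n. K n 0 y s) (\<lambda>n. H n 0 y s)) has_real_derivative K 0 1 x s) (at x)" for x s
      unfolding k1_flux_def k1_evolution
      by (auto intro!: derivative_eq_intros simp: eval_nat_numeral algebra_simps)
  qed (auto intro!: derivative_eq_intros continuous_intros)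
  then show ?thesis
    by (simp add: dens_def[abs_def] K.jet_eq)
qed

definition rho2_flux :: "(nat \<Rightarrow> real) \<Rightarrow> (nat \<Rightarrow> real) \<Rightarrow> real" where
  "rho2_flux a b = 2 * a 0 * a 1 * b 0 + 2/3 * a 0 * a 4 + 4 * a 0 * b 0 ^ 2 + a 0 * b 3
     - 2 * a 0 ^ 2 * a 2 - 2 * a 0 ^ 2 * b 1 + 1/3 * a 0 ^ 4 - 2/3 * a 1 * a 3 - a 1 * b 2
     + a 2 * b 1 + 1/3 * a 2 ^ 2 - a 3 * b 0 - 2 * b 0 * b 2 + b 1 ^ 2"

lemma conserved_rho2:
  assumes "L > 0" "\<And>x t. K 0 0 (x + L) t = K 0 0 x t" "\<And>x t. H 0 0 (x + L) t = H 0 0 x t"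
  shows "integral {0..L} (dens rho2 (\<lambda>y. K 0 0 y t) (\<lambda>y. H 0 0 y t))
       = integral {0..L} (dens rho2 (\<lambda>y. K 0 0 y s) (\<lambda>y. H 0 0 y s))"
proof (rule dens_integral_conserved[where \<Phi> = rho2_flux, OF assms])
  let ?rho_t = "\<lambda>x s. H 0 0 x s * K 0 1 x s + K 0 0 x s * H 0 1 x s"
  show "((\<lambda>s. rho2 (\<lambda>n. K n 0 x s) (\<lambda>n. H n 0 x s)) has_real_derivative ?rho_t x s) (at s)" for x s
    unfolding rho2_def by (auto intro!: derivative_eq_intros)
  show "((\<lambda>y. rho2_flux (\<lambda>n. K n 0 y s) (\<lambda>n. H n 0 y s)) has_real_derivative ?rho_t x s) (at x)" for x s
    unfolding rho2_flux_def k1_evolution k2_evolution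
    by (auto intro!: derivative_eq_intros) (simp add: eval_nat_numeral field_simps power2_eq_square power3_eq_cube)
qed (auto intro!: continuous_intros simp: rho2_def)

definition rho4_flux :: "(nat \<Rightarrow> real) \<Rightarrow> (nat \<Rightarrow> real) \<Rightarrow> real" where
  "rho4_flux a b = 4/3 * a 0 * a 1 * a 4 + 4 * a 0 * a 1 * b 0 ^ 2 + 2 * a 0 * a 1 * b 3
     - 4 * a 0 * a 1 ^ 2 * b 0 - 2 * a 0 * a 1 ^ 3 + 8/3 * a 0 * a 2 * b 2 - 8/3 * a 0 * a 3 * b 1
     + 8/3 * a 0 * a 4 * b 0 + 4 * a 0 * b 0 * b 3 + 8 * a 0 * b 0 ^ 3 - 14/3 * a 0 ^ 2 * a 1 * a 2
     - 22/3 * a 0 ^ 2 * a 1 * b 1 - 12 * a 0 ^ 2 * a 2 * b 0 + 1/3 * a 0 ^ 2 * a 5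
     - 12 * a 0 ^ 2 * b 0 * b 1 + a 0 ^ 2 * b 4 - 4/9 * a 0 ^ 3 * a 3 - 26/9 * a 0 ^ 3 * b 2
     - 4/9 * a 0 ^ 4 * a 1 + 16/9 * a 0 ^ 4 * b 0 + 4/3 * a 1 * a 2 * b 1 - 8/3 * a 1 * a 3 * b 0
     - 4 * a 1 * b 0 * b 2 + 4 * a 1 * b 1 ^ 2 - 1/3 * a 1 ^ 2 * a 3 + 8 * a 2 * b 0 * b 1
     - 1/3 * a 2 * b 4 + 8/3 * a 2 ^ 2 * b 0 - 2 * a 3 * b 0 ^ 2 + 1/3 * a 3 * b 3 - 1/3 * a 4 * b 2
     + 1/3 * a 5 * b 1 + 8 * b 0 * b 1 ^ 2 - 4 * b 0 ^ 2 * b 2"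

lemma conserved_rho4:
  assumes "L > 0" "\<And>x t. K 0 0 (x + L) t = K 0 0 x t" "\<And>x t. H 0 0 (x + L) t = H 0 0 x t"
  shows "integral {0..L} (dens rho4 (\<lambda>y. K 0 0 y t) (\<lambda>y. H 0 0 y t))
       = integral {0..L} (dens rho4 (\<lambda>y. K 0 0 y s) (\<lambda>y. H 0 0 y s))"
proof (rule dens_integral_conserved[where \<Phi> = rho4_flux, OF assms])
  \<comment> \<open>chain rule: the coefficients are \<open>pd1 rho4 j\<close> and \<open>pd2 rho4 j\<close>\<close>
  let ?rho_t = "\<lambda>x s. (2/3 * K 2 0 x s + H 1 0 x s - K 0 0 x s ^ 2) * K 2 1 x s
     - 2 * K 0 0 x s * K 1 0 x s * K 1 1 x s
     + (- 2 * K 0 0 x s * K 2 0 x s - K 1 0 x s ^ 2 - 2 * K 0 0 x s * H 1 0 x s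
        + 4/9 * K 0 0 x s ^ 3 + 2 * H 0 0 x s ^ 2) * K 0 1 x s
     + (K 2 0 x s + 2 * H 1 0 x s - K 0 0 x s ^ 2) * H 1 1 x s
     + 4 * K 0 0 x s * H 0 0 x s * H 0 1 x s"
  show "((\<lambda>s. rho4 (\<lambda>n. K n 0 x s) (\<lambda>n. H n 0 x s)) has_real_derivative ?rho_t x s) (at s)" for x s
    unfolding rho4_def by (auto intro!: derivative_eq_intros) (simp add: algebra_simps power2_eq_square power3_eq_cube)
  show "((\<lambda>y. rho4_flux (\<lambda>n. K n 0 y s) (\<lambda>n. H n 0 y s)) has_real_derivative ?rho_t x s) (at x)" for x s
    unfolding rho4_flux_def K.x_jet_eq[of 1 1] K.x_jet_eq[of 2 1] H.x_jet_eq[of 1 1] k1_evolution k2_evolution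
    by (auto intro!: derivative_eq_intros)
      (simp add: deriv_fun_simps, simp add: eval_nat_numeral field_simps power2_eq_square power3_eq_cube)
qed (auto intro!: continuous_intros simp: rho4_def)

end

subsection \<open>The curvature flow of centroaffine curves\<close>

lemma vector3_coordinates_unique:
  fixes e0 e1 e2 :: "real^3"
  assumes "det (vector [e0, e1, e2] :: real^3^3) \<noteq> 0"
    and "a0 *\<^sub>R e0 + a1 *\<^sub>R e1 + a2 *\<^sub>R e2 = b0 *\<^sub>R e0 + b1 *\<^sub>R e1 + b2 *\<^sub>R e2"
  shows "a0 = b0 \<and> a1 = b1 \<and> a2 = b2"
proof -
  have "a0 * e0 $ i + a1 * e1 $ i + a2 * e2 $ i = b0 * e0 $ i + b1 * e1 $ i + b2 * e2 $ i" for i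
    using arg_cong[OF assms(2), of "\<lambda>v. v $ i"] by simp
  from this[of 1] this[of 2] this[of 3] assms(1) show ?thesis
    unfolding det_3 by (simp add: vector_def) algebra
qed

locale centroaffine_flow = curvature_pair K H for K H +
  fixes G :: "nat \<Rightarrow> nat \<Rightarrow> real \<Rightarrow> real \<Rightarrow> real^3"
  assumes G: "smooth_partials G"
    and unimodular: "det (vector [G 0 0 x t, G 1 0 x t, G 2 0 x t] :: real^3^3) = 1"
    and frenet: "G 3 0 x t = (K 1 0 x t + H 0 0 x t) *\<^sub>R G 0 0 x t + K 0 0 x t *\<^sub>R G 1 0 x t"
    and flow: "G 0 1 x t = - (H 1 0 x t + 1/3 * (K 2 0 x t + 2 * K 0 0 x t ^ 2)) *\<^sub>R G 0 0 x t
      + H 0 0 x t *\<^sub>R G 1 0 x t + K 0 0 x t *\<^sub>R G 2 0 x t"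
begin

definition in_frame :: "nat \<Rightarrow> nat \<Rightarrow> real \<Rightarrow> (real \<Rightarrow> real) \<times> (real \<Rightarrow> real) \<times> (real \<Rightarrow> real) \<Rightarrow> bool" where
  "in_frame i j t = (\<lambda>(a, b, c).
     \<forall>y. G i j y t = a y *\<^sub>R G 0 0 y t + b y *\<^sub>R G 1 0 y t + c y *\<^sub>R G 2 0 y t)"

definition frame_step :: "real \<Rightarrow> (real \<Rightarrow> real) \<times> (real \<Rightarrow> real) \<times> (real \<Rightarrow> real)
    \<Rightarrow> (real \<Rightarrow> real) \<times> (real \<Rightarrow> real) \<times> (real \<Rightarrow> real)" where
  "frame_step t = (\<lambda>(a, b, c). (\<lambda>y. deriv a y + c y * (K 1 0 y t + H 0 0 y t),
     \<lambda>y. a y + deriv b y + c y * K 0 0 y t, \<lambda>y. b y + deriv c y))"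

lemma in_frame_x_derivative:
  assumes "in_frame i j t abc" and "\<And>y. fst abc field_differentiable at y"
    and "\<And>y. fst (snd abc) field_differentiable at y" "\<And>y. snd (snd abc) field_differentiable at y"
  shows "in_frame (Suc i) j t (frame_step t abc)"
proof -
  obtain a b c where abc: "abc = (a, b, c)"
    by (cases abc) blast
  have "G (Suc i) j x t = (deriv a x + c x * (K 1 0 x t + H 0 0 x t)) *\<^sub>R G 0 0 x t
      + (a x + deriv b x + c x * K 0 0 x t) *\<^sub>R G 1 0 x t + (b x + deriv c x) *\<^sub>R G 2 0 x t" for x
  proof -
    have "((\<lambda>y. a y *\<^sub>R G 0 0 y t + b y *\<^sub>R G 1 0 y t + c y *\<^sub>R G 2 0 y t) has_vector_derivative
        (a x *\<^sub>R G 1 0 x t + deriv a x *\<^sub>R G 0 0 x t) + (b x *\<^sub>R G 2 0 x t + deriv b x *\<^sub>R G 1 0 x t)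
        + (c x *\<^sub>R G 3 0 x t + deriv c x *\<^sub>R G 2 0 x t)) (at x)"
      using assms(2-4) smooth_partials_vector_derivative_x[OF G] unfolding abc
      by (intro has_vector_derivative_add has_vector_derivative_scaleR)
         (auto simp: DERIV_deriv_iff_field_differentiable numeral_2_eq_2 numeral_3_eq_3)
    moreover have "(\<lambda>y. G i j y t) = (\<lambda>y. a y *\<^sub>R G 0 0 y t + b y *\<^sub>R G 1 0 y t + c y *\<^sub>R G 2 0 y t)"
      using assms(1) by (auto simp: in_frame_def abc)
    ultimately have "G (Suc i) j x t = (a x *\<^sub>R G 1 0 x t + deriv a x *\<^sub>R G 0 0 x t)
        + (b x *\<^sub>R G 2 0 x t + deriv b x *\<^sub>R G 1 0 x t) + (c x *\<^sub>R G 3 0 x t + deriv c x *\<^sub>R G 2 0 x t)"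
      using vector_derivative_unique_at[OF smooth_partials_vector_derivative_x[OF G, of i j t x]] by simp
    then show ?thesis
      by (simp add: frenet algebra_simps)
  qed
  then show ?thesis
    by (simp add: in_frame_def frame_step_def abc)
qed

lemma frenet_t_derivative:
  "G 3 1 x t = (K 1 1 x t + H 0 1 x t) *\<^sub>R G 0 0 x t + (K 1 0 x t + H 0 0 x t) *\<^sub>R G 0 1 x t
     + K 0 1 x t *\<^sub>R G 1 0 x t + K 0 0 x t *\<^sub>R G 1 1 x t"
proof -
  have "((\<lambda>s. (K 1 0 x s + H 0 0 x s) *\<^sub>R G 0 0 x s + K 0 0 x s *\<^sub>R G 1 0 x s) has_vector_derivative
      ((K 1 0 x t + H 0 0 x t) *\<^sub>R G 0 1 x t + (K 1 1 x t + H 0 1 x t) *\<^sub>R G 0 0 x t)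
      + (K 0 0 x t *\<^sub>R G 1 1 x t + K 0 1 x t *\<^sub>R G 1 0 x t)) (at t)"
    using smooth_partials_vector_derivative_t[OF G]
    by (intro has_vector_derivative_add has_vector_derivative_scaleR)
       (auto intro!: derivative_eq_intros)
  moreover have "(\<lambda>s. G 3 0 x s) = (\<lambda>s. (K 1 0 x s + H 0 0 x s) *\<^sub>R G 0 0 x s + K 0 0 x s *\<^sub>R G 1 0 x s)"
    by (simp add: frenet)
  ultimately show ?thesis
    using vector_derivative_unique_at[OF smooth_partials_vector_derivative_t[OF G, of 3 0 x t]]
    by (simp add: algebra_simps)
qed

definition flow_coords :: "real \<Rightarrow> (real \<Rightarrow> real) \<times> (real \<Rightarrow> real) \<times> (real \<Rightarrow> real)" where
  "flow_coords t = (\<lambda>y. - (H 1 0 y t + 1/3 * (K 2 0 y t + 2 * K 0 0 y t ^ 2)), \<lambda>y. H 0 0 y t, \<lambda>y. K 0 0 y t)"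

lemma in_frame_flow_x_derivatives:
  "in_frame 0 1 t (flow_coords t)"
  "in_frame 1 1 t (frame_step t (flow_coords t))"
  "in_frame 3 1 t ((frame_step t ^^ 3) (flow_coords t))"
proof -
  show f0: "in_frame 0 1 t (flow_coords t)"
    unfolding in_frame_def flow_coords_def using flow by simp
  have "in_frame (Suc 0) 1 t (frame_step t (flow_coords t))"
    by (rule in_frame_x_derivative[OF f0]) (simp_all add: flow_coords_def deriv_fun_simps)
  then show f1: "in_frame 1 1 t (frame_step t (flow_coords t))"
    by simp
  have "in_frame (Suc 1) 1 t (frame_step t (frame_step t (flow_coords t)))"
    by (rule in_frame_x_derivative[OF f1]) (simp_all add: frame_step_def flow_coords_def deriv_fun_simps)
  then have f2: "in_frame 2 1 t ((frame_step t ^^ 2) (flow_coords t))"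
    by (simp add: numeral_2_eq_2)
  have "in_frame (Suc 2) 1 t (frame_step t ((frame_step t ^^ 2) (flow_coords t)))"
    by (rule in_frame_x_derivative[OF f2]) (simp_all add: frame_step_def flow_coords_def deriv_fun_simps)
  then show "in_frame 3 1 t ((frame_step t ^^ 3) (flow_coords t))"
    by (simp add: numeral_3_eq_3 numeral_2_eq_2)
qed

lemma frenet_t_derivative_coordinates:
  "fst ((frame_step t ^^ 3) (flow_coords t)) x = K 1 1 x t + H 0 1 x t
     + (K 1 0 x t + H 0 0 x t) * fst (flow_coords t) x + K 0 0 x t * fst (frame_step t (flow_coords t)) x"
  "fst (snd ((frame_step t ^^ 3) (flow_coords t))) x = (K 1 0 x t + H 0 0 x t) * fst (snd (flow_coords t)) x
     + K 0 1 x t + K 0 0 x t * fst (snd (frame_step t (flow_coords t))) x"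
proof -
  obtain a0 b0 c0 a1 b1 c1 a3 b3 c3 where
    coords: "flow_coords t = (a0, b0, c0)" "frame_step t (a0, b0, c0) = (a1, b1, c1)"
      "(frame_step t ^^ 3) (a0, b0, c0) = (a3, b3, c3)"
    by (metis prod_cases3)
  have "a3 x *\<^sub>R G 0 0 x t + b3 x *\<^sub>R G 1 0 x t + c3 x *\<^sub>R G 2 0 x t
      = (K 1 1 x t + H 0 1 x t + (K 1 0 x t + H 0 0 x t) * a0 x + K 0 0 x t * a1 x) *\<^sub>R G 0 0 x t
      + ((K 1 0 x t + H 0 0 x t) * b0 x + K 0 1 x t + K 0 0 x t * b1 x) *\<^sub>R G 1 0 x t
      + ((K 1 0 x t + H 0 0 x t) * c0 x + K 0 0 x t * c1 x) *\<^sub>R G 2 0 x t"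
    using frenet_t_derivative[of x t] in_frame_flow_x_derivatives[of t]
    unfolding coords in_frame_def by (simp add: algebra_simps)
  then have "a3 x = K 1 1 x t + H 0 1 x t + (K 1 0 x t + H 0 0 x t) * a0 x + K 0 0 x t * a1 x"
    "b3 x = (K 1 0 x t + H 0 0 x t) * b0 x + K 0 1 x t + K 0 0 x t * b1 x"
    using vector3_coordinates_unique unimodular[of x t] by (metis zero_neq_one)+
  then show "fst ((frame_step t ^^ 3) (flow_coords t)) x = K 1 1 x t + H 0 1 x t
     + (K 1 0 x t + H 0 0 x t) * fst (flow_coords t) x + K 0 0 x t * fst (frame_step t (flow_coords t)) x"
    "fst (snd ((frame_step t ^^ 3) (flow_coords t))) x = (K 1 0 x t + H 0 0 x t) * fst (snd (flow_coords t)) x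
     + K 0 1 x t + K 0 0 x t * fst (snd (frame_step t (flow_coords t))) x"
    unfolding coords by simp_all
qed

lemma k1_evolution_derived:
  "K 0 1 x t = 2 * K 0 0 x t * K 2 0 x t + 4 * K 0 0 x t * H 1 0 x t
      + 4 * K 1 0 x t * H 0 0 x t + 2 * K 1 0 x t ^ 2 - K 4 0 x t - 2 * H 3 0 x t"
  using frenet_t_derivative_coordinates(2)[of t x]
  by (simp add: frame_step_def flow_coords_def deriv_fun_simps) (simp add: eval_nat_numeral field_simps)

lemma k2_evolution_derived:
  "H 0 1 x t = - 2 * K 0 0 x t * K 3 0 x t - 2 * K 0 0 x t * H 2 0 x t
      + 4/3 * K 0 0 x t ^ 2 * K 1 0 x t - 4 * K 1 0 x t * K 2 0 x t - 2 * K 1 0 x t * H 1 0 x t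
      + 2/3 * K 5 0 x t + 4 * H 0 0 x t * H 1 0 x t + H 4 0 x t"
  using frenet_t_derivative_coordinates(1)[of t x]
  unfolding K.x_jet_eq[of 1 1] k1_evolution_derived
  by (simp add: frame_step_def flow_coords_def deriv_fun_simps) (simp add: eval_nat_numeral field_simps)

end

sublocale centroaffine_flow \<subseteq> curvature_flow
  by unfold_locales (fact k1_evolution_derived, fact k2_evolution_derived)

theorem mainTheorem3:
  fixes \<gamma> :: "real \<Rightarrow> real \<Rightarrow> real^3"
    and k1 k2 :: "real \<Rightarrow> real \<Rightarrow> real"
  assumes smooth: "C_inf2 \<gamma>" "C_inf2 k1" "C_inf2 k2"
    and arclength: "\<forall>x t. det (vector [\<gamma> x t, Dx 1 \<gamma> x t, Dx 2 \<gamma> x t] :: real^3^3) = 1"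
    and frenet: "\<forall>x t. Dx 3 \<gamma> x t = Dx 1 (\<lambda>y s. k1 y s *\<^sub>R \<gamma> y s) x t + k2 x t *\<^sub>R \<gamma> x t"
    and flow: "\<forall>x t. Dt \<gamma> x t = k1 x t *\<^sub>R Dx 2 \<gamma> x t + k2 x t *\<^sub>R Dx 1 \<gamma> x t
                 + (- (Dx 1 k2 x t + 1/3 * (Dx 2 k1 x t + 2 * (k1 x t)^2))) *\<^sub>R \<gamma> x t"
  shows "(\<forall>x t.
            Dt k1 x t = opP1 (\<lambda>y. k1 y t) (\<lambda>y. k2 y t)
                          (euler1 rho2 (\<lambda>y. k1 y t) (\<lambda>y. k2 y t))
                          (euler2 rho2 (\<lambda>y. k1 y t) (\<lambda>y. k2 y t)) x
          \<and> Dt k2 x t = opP2 (\<lambda>y. k1 y t) (\<lambda>y. k2 y t)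
                          (euler1 rho2 (\<lambda>y. k1 y t) (\<lambda>y. k2 y t))
                          (euler2 rho2 (\<lambda>y. k1 y t) (\<lambda>y. k2 y t)) x
          \<and> Dt k1 x t = opQ1 (euler1 rho4 (\<lambda>y. k1 y t) (\<lambda>y. k2 y t))
                          (euler2 rho4 (\<lambda>y. k1 y t) (\<lambda>y. k2 y t)) x
          \<and> Dt k2 x t = opQ2 (euler1 rho4 (\<lambda>y. k1 y t) (\<lambda>y. k2 y t))
                          (euler2 rho4 (\<lambda>y. k1 y t) (\<lambda>y. k2 y t)) x)
         \<and> (\<forall>L>0. (\<forall>x t. k1 (x + L) t = k1 x t \<and> k2 (x + L) t = k2 x t) \<longrightarrow>
              (\<forall>t s.
                 integral {0..L} (dens rho2 (\<lambda>y. k1 y t) (\<lambda>y. k2 y t))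
                   = integral {0..L} (dens rho2 (\<lambda>y. k1 y s) (\<lambda>y. k2 y s))
               \<and> integral {0..L} (dens rho4 (\<lambda>y. k1 y t) (\<lambda>y. k2 y t))
                   = integral {0..L} (dens rho4 (\<lambda>y. k1 y s) (\<lambda>y. k2 y s))
               \<and> integral {0..L} (\<lambda>x. k1 x t) = integral {0..L} (\<lambda>x. k1 x s)))"
proof -
  obtain G where G0: "G 0 0 = \<gamma>" and G: "smooth_partials G"
    using smooth(1) C_inf2_iff_smooth_partials by blast
  obtain K where K0: "K 0 0 = k1" and K: "smooth_partials K"
    using smooth(2) C_inf2_iff_smooth_partials by blast
  obtain H where H0: "H 0 0 = k2" and H: "smooth_partials H"
    using smooth(3) C_inf2_iff_smooth_partials by blast
  interpret centroaffine_flow K H G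
  proof unfold_locales
    show "det (vector [G 0 0 x t, G 1 0 x t, G 2 0 x t] :: real^3^3) = 1" for x t
      using arclength by (simp add: G0[symmetric] Dx_smooth_partials[OF G])
    show "G 3 0 x t = (K 1 0 x t + H 0 0 x t) *\<^sub>R G 0 0 x t + K 0 0 x t *\<^sub>R G 1 0 x t" for x t
      using frenet Dx_1_scaleR_smooth_partials[OF K G, of x t]
      unfolding G0[symmetric] K0[symmetric] H0[symmetric]
      by (simp add: Dx_smooth_partials[OF G] algebra_simps)
    show "G 0 1 x t = - (H 1 0 x t + 1/3 * (K 2 0 x t + 2 * K 0 0 x t ^ 2)) *\<^sub>R G 0 0 x t
        + H 0 0 x t *\<^sub>R G 1 0 x t + K 0 0 x t *\<^sub>R G 2 0 x t" for x t
      using flow unfolding G0[symmetric] K0[symmetric] H0[symmetric]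
      by (simp add: Dx_smooth_partials[OF G] Dx_smooth_partials[OF K] Dx_smooth_partials[OF H]
          Dt_smooth_partials[OF G] algebra_simps)
  qed (fact K H G)+
  show ?thesis
    unfolding K0[symmetric] H0[symmetric] Dt_smooth_partials[OF K] Dt_smooth_partials[OF H]
    using k1_evolution_eq_opP1 k2_evolution_eq_opP2 k1_evolution_eq_opQ1 k2_evolution_eq_opQ2
      conserved_rho2 conserved_rho4 conserved_k1 by simp
qed

end
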